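(* Let $\delta_j,\delta_k$ be coprime integers with $1<\delta_j<\delta_k$, let $r=\delta_k\bmod\delta_j$ and let $f\colon \mathcal B(\delta_j,r)\to\mathcal B(\delta_k,\delta_j)$, $f(x',y')=(y',\,x'-y'\lfloor \delta_k/\delta_j\rfloor)$. Then the irreducible elements of $\mathcal B(\delta_k,\delta_j)\cap f(\mathcal B(\delta_j,r))$ are exactly the images $f(\mathbf x')$ of the irreducible elements $\mathbf x'$ of $\mathcal B(\delta_j,r)$.
   Context: For coprime positive integers $p,q$ and $i\in\{1,\ldots,\max\{p,q\}\}$, the $\lambda$-B\'ezout couple $\boldsymbol\lambda_i$ of $i$ for $(p,q)$ is the unique $(x,y)\in\mathbb Z^2$ with $xp+yq=i$ and $0<y\le p$, and the $\mu$-B\'ezout couple $\boldsymbol\mu_i$ of $i$ for $(p,q)$ is the unique $(x,y)\in\mathbb Z^2$ with $xp+yq=i$ and $0<x\le q$. $\mathcal B(p,q)$ denotes the set of all $\lambda$- and $\mu$-B\'ezout couples for $(p,q)$. $\boldsymbol\lambda_i$ is irreducible if there are no $j,k\in\{1,\ldots,\max\{p,q\}\}$ with $\boldsymbol\lambda_i=\boldsymbol\lambda_j+\boldsymbol\lambda_k$; likewise $\boldsymbol\mu_i$ is irreducible if there are no such $j,k$ with $\boldsymbol\mu_i=\boldsymbol\mu_j+\boldsymbol\mu_k$. *)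

theory Defs
  imports Main
begin

definition lam_couple :: "int \<Rightarrow> int \<Rightarrow> int \<Rightarrow> int \<times> int" where
  "lam_couple p q i = (THE c. fst c * p + snd c * q = i \<and> 0 < snd c \<and> snd c \<le> p)"

definition mu_couple :: "int \<Rightarrow> int \<Rightarrow> int \<Rightarrow> int \<times> int" where
  "mu_couple p q i = (THE c. fst c * p + snd c * q = i \<and> 0 < fst c \<and> fst c \<le> q)"

definition bezout_set :: "int \<Rightarrow> int \<Rightarrow> (int \<times> int) set" where
  "bezout_set p q = lam_couple p q ` {1..max p q} \<union> mu_couple p q ` {1..max p q}"

definition lam_irreducible :: "int \<Rightarrow> int \<Rightarrow> int \<Rightarrow> bool" where
  "lam_irreducible p q i \<longleftrightarrow>
     \<not> (\<exists>j\<in>{1..max p q}. \<exists>k\<in>{1..max p q}.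
          fst (lam_couple p q i) = fst (lam_couple p q j) + fst (lam_couple p q k) \<and>
          snd (lam_couple p q i) = snd (lam_couple p q j) + snd (lam_couple p q k))"

definition mu_irreducible :: "int \<Rightarrow> int \<Rightarrow> int \<Rightarrow> bool" where
  "mu_irreducible p q i \<longleftrightarrow>
     \<not> (\<exists>j\<in>{1..max p q}. \<exists>k\<in>{1..max p q}.
          fst (mu_couple p q i) = fst (mu_couple p q j) + fst (mu_couple p q k) \<and>
          snd (mu_couple p q i) = snd (mu_couple p q j) + snd (mu_couple p q k))"

definition irreducible_elems :: "int \<Rightarrow> int \<Rightarrow> (int \<times> int) set" where
  "irreducible_elems p q =
     {lam_couple p q i | i. i \<in> {1..max p q} \<and> lam_irreducible p q i} \<union>
     {mu_couple p q i | i. i \<in> {1..max p q} \<and> mu_irreducible p q i}"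

end

theory Submission
  imports Defs "HOL-Library.Product_Plus"
begin

text \<open>Write \<open>a = \<lfloor>dk/dj\<rfloor>\<close>, \<open>r = dk mod dj\<close> and \<open>x p + y q\<close> for the value of a couple \<open>(x, y)\<close>
  for \<open>(p, q)\<close>. The map \<open>f\<close> is an additive bijection of \<open>\<int>\<^sup>2\<close> whose inverse
  \<open>(x, y) \<mapsto> (y + a x, x)\<close> preserves values, since \<open>(y + a x) dj + x r = x dk + y dj\<close>.
  For a couple of value in \<open>[1, q]\<close>, being a \<open>\<lambda>\<close>-couple (\<open>0 < y \<le> p\<close>) is equivalent to
  \<open>-q < x \<le> 0\<close>, a condition independent of \<open>p\<close>; hence \<open>f\<close> maps the \<open>\<mu>\<close>-couples of
  \<open>(dj, r)\<close> onto the \<open>\<lambda>\<close>-couples of \<open>(dk, dj)\<close> of value at most \<open>dj\<close>, and likewise the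
  \<open>\<lambda>\<close>-couples onto the \<open>\<mu>\<close>-couples of value at most \<open>dj\<close>. Values are positive and
  additive, so a couple of value at most \<open>dj\<close> can only split into couples of value at most
  \<open>dj\<close>: irreducibility in \<open>\<B>(dk, dj)\<close> and in this part of it agree, and \<open>f\<close> transports
  it from \<open>\<B>(dj, r)\<close>.\<close>

definition couple_value :: "int \<Rightarrow> int \<Rightarrow> int \<times> int \<Rightarrow> int" where
  "couple_value p q c = fst c * p + snd c * q"

lemma couple_value_add: "couple_value p q (c + d) = couple_value p q c + couple_value p q d"
  by (simp add: couple_value_def algebra_simps)

lemma bezout_couple_exists:
  fixes p q i :: int
  assumes "coprime p q" and "0 < p"
  shows "\<exists>x y. x * p + y * q = i \<and> y \<in> {1..p}"
proof -
  obtain u v where uv: "u * p + v * q = 1"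
    using bezout_int[of p q] \<open>coprime p q\<close> by (metis coprime_iff_gcd_eq_1)
  define y where "y = (i * v - 1) mod p + 1"
  have "0 \<le> (i * v - 1) mod p" "(i * v - 1) mod p < p" using \<open>0 < p\<close> by simp_all
  then have y: "y \<in> {1..p}" unfolding y_def by simp
  have "y - i * v = (i * v - 1) mod p - (i * v - 1)" by (simp add: y_def)
  then have "p dvd y - i * v" by (metis mod_eq_dvd_iff mod_mod_trivial)
  then have "p dvd (y - i * v) * q - (i * u) * p" by simp
  also have "(y - i * v) * q - (i * u) * p = y * q - i * (u * p + v * q)"
    by (simp add: algebra_simps)
  also have "\<dots> = y * q - i" using uv by simp
  finally have "p dvd i - y * q" by (simp add: dvd_diff_commute)
  then obtain x where "i - y * q = p * x" by (auto elim: dvdE)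
  then have "x * p + y * q = i" by (simp add: algebra_simps)
  with y show ?thesis by blast
qed

lemma bezout_couple_unique:
  fixes p q :: int
  assumes "coprime p q"
    and "x1 * p + y1 * q = x2 * p + y2 * q" and "y1 \<in> {1..p}" and "y2 \<in> {1..p}"
  shows "x1 = x2 \<and> y1 = y2"
proof -
  have "(y1 - y2) * q = p * (x2 - x1)" using assms(2) by (simp add: algebra_simps)
  then have "p dvd (y1 - y2) * q" by simp
  then have "p dvd y1 - y2" using \<open>coprime p q\<close> coprime_dvd_mult_left_iff by blast
  have "y1 = y2"
  proof (rule ccontr)
    assume "y1 \<noteq> y2"
    then have "\<bar>p\<bar> \<le> \<bar>y1 - y2\<bar>" using dvd_imp_le_int \<open>p dvd y1 - y2\<close> by simp
    then show False using assms(3,4) by auto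
  qed
  with assms(2,3) show ?thesis by auto
qed

lemma snd_bound_iff_fst_bound:
  fixes p q x y :: int
  assumes "0 < p" and "0 < q" and "1 \<le> x * p + y * q" and "x * p + y * q \<le> q"
  shows "y \<in> {1..p} \<longleftrightarrow> x \<in> {-q<..0}"
proof
  assume "y \<in> {1..p}"
  then have "q \<le> y * q" "y * q \<le> q * p" using \<open>0 < q\<close> by (simp_all add: mult_right_mono mult.commute)
  then have "x * p \<le> 0" "(- q) * p < x * p" using assms(3,4) by linarith+
  then show "x \<in> {-q<..0}"
    using \<open>0 < p\<close> mult_right_less_imp_less[of "-q" p x] by (simp add: mult_le_0_iff)
next
  assume "x \<in> {-q<..0}"
  then have "x * p \<le> 0" "(1 - q) * p \<le> x * p" using \<open>0 < p\<close> by (simp_all add: mult_le_0_iff mult_right_mono)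
  then have "x * p \<le> 0" "p - q * p \<le> x * p" by (simp_all add: algebra_simps)
  then have "0 < y * q" "y * q < q * p + q" using assms(1,3,4) by linarith+
  then have "0 < y * q" "y * q < (p + 1) * q" by (simp_all add: algebra_simps)
  then show "y \<in> {1..p}" using \<open>0 < q\<close> by (simp add: zero_less_mult_iff mult_less_cancel_right)
qed

definition lambda_couples :: "int \<Rightarrow> int \<Rightarrow> (int \<times> int) set" where
  "lambda_couples p q = {c. couple_value p q c \<in> {1..max p q} \<and> snd c \<in> {1..p}}"

definition mu_couples :: "int \<Rightarrow> int \<Rightarrow> (int \<times> int) set" where
  "mu_couples p q = {c. couple_value p q c \<in> {1..max p q} \<and> fst c \<in> {1..q}}"

lemma lam_couple_eqI:
  assumes "coprime p q" and "couple_value p q c = i" and "snd c \<in> {1..p}"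
  shows "lam_couple p q i = c"
  unfolding lam_couple_def
proof (rule the_equality)
  show "fst c * p + snd c * q = i \<and> 0 < snd c \<and> snd c \<le> p"
    using assms(2,3) by (simp add: couple_value_def)
next
  fix c' assume "fst c' * p + snd c' * q = i \<and> 0 < snd c' \<and> snd c' \<le> p"
  then show "c' = c"
    using bezout_couple_unique[OF \<open>coprime p q\<close>, of "fst c'" "snd c'" "fst c" "snd c"] assms(2,3)
    by (simp add: couple_value_def prod_eq_iff)
qed

lemma lam_couple_correct:
  assumes "coprime p q" and "0 < p"
  shows "couple_value p q (lam_couple p q i) = i \<and> snd (lam_couple p q i) \<in> {1..p}"
proof -
  obtain x y where "x * p + y * q = i" and "y \<in> {1..p}"
    using bezout_couple_exists[OF assms] by blast
  moreover from this have "lam_couple p q i = (x, y)"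
    using lam_couple_eqI[OF \<open>coprime p q\<close>, of "(x, y)" i] by (simp add: couple_value_def)
  ultimately show ?thesis by (simp add: couple_value_def)
qed

lemma mu_couple_eq_swap_lam_couple:
  assumes "coprime p q" and "0 < q"
  shows "mu_couple p q i = prod.swap (lam_couple q p i)"
  unfolding mu_couple_def
proof (rule the_equality)
  show "fst (prod.swap (lam_couple q p i)) * p + snd (prod.swap (lam_couple q p i)) * q = i \<and>
      0 < fst (prod.swap (lam_couple q p i)) \<and> fst (prod.swap (lam_couple q p i)) \<le> q"
    using lam_couple_correct[of q p i] assms by (simp add: coprime_commute couple_value_def add.commute)
next
  fix c assume "fst c * p + snd c * q = i \<and> 0 < fst c \<and> fst c \<le> q"
  then have "lam_couple q p i = prod.swap c"
    using assms(1) by (intro lam_couple_eqI) (simp_all add: coprime_commute couple_value_def add.commute)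
  then show "c = prod.swap (lam_couple q p i)" by simp
qed

lemma lam_couple_image:
  assumes "coprime p q" and "0 < p"
  shows "lam_couple p q ` {1..max p q} = lambda_couples p q"
proof
  show "lam_couple p q ` {1..max p q} \<subseteq> lambda_couples p q"
    using lam_couple_correct[OF assms] by (auto simp: lambda_couples_def)
  show "lambda_couples p q \<subseteq> lam_couple p q ` {1..max p q}"
  proof
    fix c assume "c \<in> lambda_couples p q"
    then have "lam_couple p q (couple_value p q c) = c" and "couple_value p q c \<in> {1..max p q}"
      using lam_couple_eqI[OF \<open>coprime p q\<close>] by (simp_all add: lambda_couples_def)
    then show "c \<in> lam_couple p q ` {1..max p q}" by (metis imageI)
  qed
qed

lemma swap_lambda_couples: "prod.swap ` lambda_couples q p = mu_couples p q"
proof (rule set_eqI)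
  fix c :: "int \<times> int"
  show "c \<in> prod.swap ` lambda_couples q p \<longleftrightarrow> c \<in> mu_couples p q"
    by (cases c) (simp add: lambda_couples_def mu_couples_def couple_value_def max.commute add.commute)
qed

lemma mu_couple_image:
  assumes "coprime p q" and "0 < q"
  shows "mu_couple p q ` {1..max p q} = mu_couples p q"
proof -
  have "mu_couple p q ` {1..max p q} = prod.swap ` lam_couple q p ` {1..max q p}"
    using mu_couple_eq_swap_lam_couple[OF assms] by (simp add: image_image max.commute)
  also have "\<dots> = mu_couples p q"
    using assms by (simp add: lam_couple_image coprime_commute swap_lambda_couples)
  finally show ?thesis .
qed

lemma bezout_set_eq:
  assumes "coprime p q" and "0 < p" and "0 < q"
  shows "bezout_set p q = lambda_couples p q \<union> mu_couples p q"
  using assms by (simp add: bezout_set_def lam_couple_image mu_couple_image)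

definition irreducibles :: "'a::plus set \<Rightarrow> 'a set" where
  "irreducibles S = {c \<in> S. \<not> (\<exists>d\<in>S. \<exists>e\<in>S. c = d + e)}"

lemma irreducibles_subset: "irreducibles S \<subseteq> S"
  by (auto simp: irreducibles_def)

lemma irreducible_values_eq_irreducibles_image:
  fixes g :: "'i \<Rightarrow> 'a::plus \<times> 'b::plus"
  shows "{g i |i. i \<in> R \<and> \<not> (\<exists>j\<in>R. \<exists>k\<in>R.
             fst (g i) = fst (g j) + fst (g k) \<and> snd (g i) = snd (g j) + snd (g k))}
         = irreducibles (g ` R)"
  by (auto simp: irreducibles_def prod_eq_iff)

lemma irreducible_elems_eq:
  assumes "coprime p q" and "0 < p" and "0 < q"
  shows "irreducible_elems p q = irreducibles (lambda_couples p q) \<union> irreducibles (mu_couples p q)"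
  using assms unfolding irreducible_elems_def lam_irreducible_def mu_irreducible_def
    irreducible_values_eq_irreducibles_image
  by (simp add: lam_couple_image mu_couple_image)

lemma irreducibles_additive_image:
  fixes F :: "'a::plus \<Rightarrow> 'b::plus"
  assumes "inj F" and additive: "\<And>d e. F (d + e) = F d + F e"
  shows "irreducibles (F ` S) = F ` irreducibles S"
proof (rule set_eqI)
  fix c
  have sum_iff: "F w = F d + F e \<longleftrightarrow> w = d + e" for w d e
    using \<open>inj F\<close> by (simp add: additive[symmetric] inj_eq)
  show "c \<in> irreducibles (F ` S) \<longleftrightarrow> c \<in> F ` irreducibles S"
  proof
    assume c: "c \<in> irreducibles (F ` S)"
    then obtain w where w: "w \<in> S" "c = F w" by (auto simp: irreducibles_def)
    have "\<not> (\<exists>d\<in>S. \<exists>e\<in>S. w = d + e)"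
    proof
      assume "\<exists>d\<in>S. \<exists>e\<in>S. w = d + e"
      then obtain d e where "d \<in> S" "e \<in> S" "c = F d + F e"
        using w additive by blast
      with c show False unfolding irreducibles_def by blast
    qed
    with w show "c \<in> F ` irreducibles S" by (auto simp: irreducibles_def)
  next
    assume "c \<in> F ` irreducibles S"
    then obtain w where w: "w \<in> irreducibles S" "c = F w" by auto
    then have "\<not> (\<exists>d\<in>F ` S. \<exists>e\<in>F ` S. c = d + e)"
      by (auto simp: irreducibles_def sum_iff)
    with w show "c \<in> irreducibles (F ` S)" by (auto simp: irreducibles_def)
  qed
qed

lemma irreducibles_Int_sublevel:
  fixes g :: "'a::plus \<Rightarrow> 'b::ordered_comm_monoid_add"
  assumes nonneg: "\<And>c. c \<in> S \<Longrightarrow> 0 \<le> g c" and additive: "\<And>d e. g (d + e) = g d + g e"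
  shows "irreducibles S \<inter> {c. g c \<le> b} = irreducibles (S \<inter> {c. g c \<le> b})"
proof -
  have summands_below: "g d \<le> b \<and> g e \<le> b" if "d \<in> S" "e \<in> S" "g (d + e) \<le> b" for d e
  proof -
    have "g d \<le> g d + g e" and "g e \<le> g d + g e"
      using nonneg[OF \<open>d \<in> S\<close>] nonneg[OF \<open>e \<in> S\<close>]
      by (simp_all add: add_increasing add_increasing2)
    moreover have "g d + g e \<le> b" using that(3) by (simp add: additive)
    ultimately show ?thesis using order_trans by blast
  qed
  show ?thesis
    unfolding irreducibles_def using summands_below by blast
qed

definition shear :: "int \<Rightarrow> int \<times> int \<Rightarrow> int \<times> int" where
  "shear a = (\<lambda>(x', y'). (y', x' - y' * a))"

lemma shear_add: "shear a (c + d) = shear a c + shear a d"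
  by (simp add: shear_def split_def algebra_simps)

lemma inj_shear: "inj (shear a)"
  by (rule injI) (auto simp: shear_def split_def prod_eq_iff)

lemma shear_image: "shear a ` S = {(x, y). (y + x * a, x) \<in> S}"
proof (rule set_eqI)
  fix c :: "int \<times> int"
  obtain x y where c: "c = (x, y)" by fastforce
  have "shear a (y + x * a, x) = c" by (simp add: shear_def c)
  moreover have "w = (y + x * a, x)" if "shear a w = c" for w
    using that by (auto simp: shear_def c split_def prod_eq_iff)
  ultimately have "c \<in> shear a ` S \<longleftrightarrow> (y + x * a, x) \<in> S"
    by (metis image_iff)
  then show "c \<in> shear a ` S \<longleftrightarrow> c \<in> {(x, y). (y + x * a, x) \<in> S}"
    by (simp add: c)
qed

lemma couple_value_unshear:
  assumes "p = a * q + r"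
  shows "couple_value q r (y + x * a, x) = couple_value p q (x, y)"
  using assms by (simp add: couple_value_def algebra_simps)

lemma shear_lambda_couples:
  assumes "p = a * q + r" and "r \<le> q"
  shows "shear a ` lambda_couples q r = mu_couples p q \<inter> {c. couple_value p q c \<le> q}"
proof -
  have "max q r = q" and "q \<le> max p q" using assms(2) by simp_all
  then show ?thesis
    by (auto simp: shear_image lambda_couples_def mu_couples_def couple_value_unshear[OF assms(1)])
qed

lemma shear_mu_couples:
  assumes "p = a * q + r" and "0 < p" and "0 < r" and "r \<le> q"
  shows "shear a ` mu_couples q r = lambda_couples p q \<inter> {c. couple_value p q c \<le> q}"
proof -
  have "(y + x * a, x) \<in> mu_couples q r \<longleftrightarrow> (x, y) \<in> lambda_couples p q \<inter> {c. couple_value p q c \<le> q}"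
    for x y
  proof -
    have same_value: "x * r + (y + x * a) * q = x * p + y * q"
      using assms(1) by (simp add: algebra_simps)
    have "max q r = q" and "q \<le> max p q" using assms(4) by simp_all
    then have "(y + x * a, x) \<in> mu_couples q r \<longleftrightarrow> x * p + y * q \<in> {1..q} \<and> y + x * a \<in> {1..r}"
      and "(x, y) \<in> lambda_couples p q \<inter> {c. couple_value p q c \<le> q} \<longleftrightarrow>
           x * p + y * q \<in> {1..q} \<and> y \<in> {1..p}"
      using same_value by (auto simp: lambda_couples_def mu_couples_def couple_value_def add.commute)
    moreover have "y + x * a \<in> {1..r} \<longleftrightarrow> y \<in> {1..p}" if "x * p + y * q \<in> {1..q}"
      using that same_value assms(2,3) snd_bound_iff_fst_bound[of r q x "y + x * a"]
        snd_bound_iff_fst_bound[of p q x y] by auto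
    ultimately show ?thesis by blast
  qed
  then show ?thesis
    by (auto simp: shear_image)
qed

lemma irreducible_elems_Int_shear_bezout_set:
  assumes "p = a * q + r" and "coprime p q" and "coprime q r"
    and "0 < p" and "0 < r" and "r \<le> q"
  shows "irreducible_elems p q \<inter> shear a ` bezout_set q r = shear a ` irreducible_elems q r"
proof -
  define L M V where "L = lambda_couples p q" and "M = mu_couples p q"
    and "V = {c. couple_value p q c \<le> q}"
  have "0 < q" using assms(5,6) by simp
  have shear_L: "shear a ` lambda_couples q r = M \<inter> V"
    unfolding M_def V_def using assms(1,6) by (rule shear_lambda_couples)
  have shear_M: "shear a ` mu_couples q r = L \<inter> V"
    unfolding L_def V_def using assms(1,4,5,6) by (rule shear_mu_couples)
  have nonneg: "0 \<le> couple_value p q c" if "c \<in> L \<union> M" for c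
    using that by (auto simp: L_def M_def lambda_couples_def mu_couples_def)
  have "irreducible_elems p q \<inter> shear a ` bezout_set q r
        = (irreducibles L \<union> irreducibles M) \<inter> ((M \<inter> V) \<union> (L \<inter> V))"
    using assms \<open>0 < q\<close> shear_L shear_M
    by (simp add: L_def M_def irreducible_elems_eq bezout_set_eq image_Un)
  also have "\<dots> = irreducibles (L \<inter> V) \<union> irreducibles (M \<inter> V)"
    using irreducibles_subset[of L] irreducibles_subset[of M] nonneg
      irreducibles_Int_sublevel[of L "couple_value p q" q]
      irreducibles_Int_sublevel[of M "couple_value p q" q]
    unfolding V_def by (auto simp: couple_value_add)
  also have "\<dots> = shear a ` irreducibles (mu_couples q r) \<union> shear a ` irreducibles (lambda_couples q r)"
    by (simp flip: shear_L shear_M add: irreducibles_additive_image inj_shear shear_add)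
  also have "\<dots> = shear a ` irreducible_elems q r"
    using assms \<open>0 < q\<close> by (simp add: irreducible_elems_eq image_Un Un_commute)
  finally show ?thesis .
qed

theorem proposition3p10:
  fixes dj dk :: int
  assumes "coprime dj dk" and "1 < dj" and "dj < dk"
  shows "irreducible_elems dk dj \<inter>
           (\<lambda>(x', y'). (y', x' - y' * (dk div dj))) ` bezout_set dj (dk mod dj)
         = (\<lambda>(x', y'). (y', x' - y' * (dk div dj))) ` irreducible_elems dj (dk mod dj)"
proof -
  have "dk mod dj \<noteq> 0"
    using assms(1,2) by (auto simp: mod_eq_0_iff_dvd coprime_absorb_left)
  then have "0 < dk mod dj" and "dk mod dj \<le> dj"
    using pos_mod_sign[of dj dk] pos_mod_bound[of dj dk] \<open>1 < dj\<close> by linarith+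
  moreover have "coprime dk dj" and "coprime dj (dk mod dj)"
    using assms(1,2) by (simp_all add: coprime_commute)
  moreover have "dk = dk div dj * dj + dk mod dj" and "0 < dk"
    using assms(2,3) by simp_all
  ultimately show ?thesis
    using irreducible_elems_Int_shear_bezout_set[of dk "dk div dj" dj "dk mod dj"]
    by (simp add: shear_def)
qed

end
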